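(* Let $\Lambda\subseteq\Sigma_A$ and $\Gamma\subseteq\Sigma_B$ be shift spaces and let $\Phi:\Lambda\to\Gamma$ be a sliding block code such that $\Phi(\mathcal O)=\mathcal O$. Then for every finite sequence $x\in\Lambda^{\mathrm{fin}}$, $\Phi(x)$ is a finite sequence in $\Gamma$ with length $l(\Phi(x))\le l(x)$.
   Context: $A,B$ are countable discrete alphabets; $\varepsilon$ is the empty letter. $\Sigma_A$ consists of $A^{\mathbb N}$ together with (when $A$ is infinite) the finite sequences in $A\cup\{\varepsilon\}$ (some entry $\varepsilon$, and all entries after the first $\varepsilon$ equal $\varepsilon$), including the empty sequence $\mathcal O=(\varepsilon\varepsilon\dots)$. The length $l(x)$ is the number of entries before the first $\varepsilon$ ($\infty$ if none); $\Lambda^{\mathrm{fin}}$ is the set of finite sequences in $\Lambda$. The topology is generated by the generalized cylinders $Z(x,F)=\{y: y_i=x_i\ (i\le l(x)),\ y_{l(x)+1}\notin F\}$ ($x$ finite, $F\subset A$ finite). The shift is $\sigma((x_i)_i)=(x_{i+1})_i$. A shift space is a closed, $\sigma$-invariant $\Lambda\subseteq\Sigma_A$ with the infinite extension property ($\mathcal O\in\Lambda$ iff infinitely many letters occur in $\Lambda$; a finite $x\neq\mathcal O$ is in $\Lambda$ iff infinitely many letters $b$ are such that $xb$ occurs as a word in some element of $\Lambda$). $B(\Sigma_A)$ denotes the set of finite words occurring in elements of $\Sigma_A$. A set $C\subseteq\Lambda$ is finitely defined in $\Lambda$ if there exist $I,J\subseteq\mathbb N$, integers $\ell_i,n_j\ge0$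 and words $b_i,d_j\in B(\Sigma_A)$ with $C=\{x\in\Lambda: (x_1\dots x_{1+\ell_i})=b_i\text{ for some } i\}$ and $\Lambda\setminus C=\{x\in\Lambda: (x_1\dots x_{1+n_j})=d_j\text{ for some } j\}$. A map $\Phi:\Lambda\to\Gamma$ is a sliding block code if there is a partition $\{C_a\}_{a\in B\cup\{\varepsilon\}}$ of $\Lambda$ into finitely defined sets with $\sigma(C_\varepsilon)\subseteq C_\varepsilon$ such that for all $x\in\Lambda$, $n\in\mathbb N$, $(\Phi(x))_n$ is the unique $a$ with $\sigma^{n-1}(x)\in C_a$. *)

theory Defs
  imports "HOL-Analysis.Analysis" "HOL-Library.Extended_Nat"
begin

text \<open>Sequences are indexed from 0 (entry i corresponds to the paper's x_(i+1)).
  The empty letter is None; a letter a of the alphabet is Some a.\<close>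

type_synonym 'a seq = "nat \<Rightarrow> 'a option"

definition emptyseq :: "'a seq" where
  "emptyseq = (\<lambda>_. None)"

definition FullShift :: "'a set \<Rightarrow> 'a seq set" where
  "FullShift A = {x. (\<forall>i. x i \<in> Some ` A) \<or>
      (infinite A \<and> (\<forall>i. x i \<in> insert None (Some ` A)) \<and> (\<exists>i. x i = None) \<and>
       (\<forall>i j. i \<le> j \<longrightarrow> x i = None \<longrightarrow> x j = None))}"

definition len :: "'a seq \<Rightarrow> enat" where
  "len x = (if (\<forall>i. x i \<noteq> None) then \<infinity> else enat (LEAST i. x i = None))"

definition shift :: "'a seq \<Rightarrow> 'a seq" where
  "shift x = (\<lambda>i. x (Suc i))"

definition cyl :: "'a set \<Rightarrow> 'a list \<Rightarrow> 'a set \<Rightarrow> 'a seq set" where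
  "cyl A w F = {y \<in> FullShift A. (\<forall>i<length w. y i = Some (w ! i)) \<and> y (length w) \<notin> Some ` F}"

definition cylinders :: "'a set \<Rightarrow> 'a seq set set" where
  "cylinders A = {cyl A w F | w F. w \<in> lists A \<and> F \<subseteq> A \<and> finite F}"

definition shift_topology :: "'a set \<Rightarrow> 'a seq topology" where
  "shift_topology A = subtopology (topology_generated_by (cylinders A)) (FullShift A)"

definition occurs :: "'a option list \<Rightarrow> 'a seq \<Rightarrow> bool" where
  "occurs w y = (\<exists>k. \<forall>i<length w. y (k + i) = w ! i)"

definition blocks :: "'a set \<Rightarrow> 'a option list set" where
  "blocks A = {w. \<exists>y\<in>FullShift A. occurs w y}"

definition finseq :: "'a list \<Rightarrow> 'a seq" where
  "finseq w = (\<lambda>i. if i < length w then Some (w ! i) else None)"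

definition prefix_of :: "'a seq \<Rightarrow> nat \<Rightarrow> 'a option list" where
  "prefix_of x n = map x [0..<n]"

definition infinite_extension_property :: "'a set \<Rightarrow> 'a seq set \<Rightarrow> bool" where
  "infinite_extension_property A \<Lambda> \<longleftrightarrow>
     (emptyseq \<in> \<Lambda> \<longleftrightarrow> infinite {a. \<exists>x\<in>\<Lambda>. \<exists>i. x i = Some a}) \<and>
     (\<forall>w\<in>lists A. w \<noteq> [] \<longrightarrow>
        (finseq w \<in> \<Lambda> \<longleftrightarrow> infinite {b. \<exists>y\<in>\<Lambda>. occurs (map Some (w @ [b])) y}))"

definition shift_space :: "'a set \<Rightarrow> 'a seq set \<Rightarrow> bool" where
  "shift_space A \<Lambda> \<longleftrightarrow> \<Lambda> \<subseteq> FullShift A \<and> closedin (shift_topology A) \<Lambda> \<and>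
     shift ` \<Lambda> \<subseteq> \<Lambda> \<and> infinite_extension_property A \<Lambda>"

definition finitely_defined :: "'a set \<Rightarrow> 'a seq set \<Rightarrow> 'a seq set \<Rightarrow> bool" where
  "finitely_defined A \<Lambda> C \<longleftrightarrow> C \<subseteq> \<Lambda> \<and>
     (\<exists>(I::nat set) (l::nat \<Rightarrow> nat) b (J::nat set) (n::nat \<Rightarrow> nat) d.
        (\<forall>i\<in>I. b i \<in> blocks A) \<and> (\<forall>j\<in>J. d j \<in> blocks A) \<and>
        C = {x \<in> \<Lambda>. \<exists>i\<in>I. prefix_of x (Suc (l i)) = b i} \<and>
        \<Lambda> - C = {x \<in> \<Lambda>. \<exists>j\<in>J. prefix_of x (Suc (n j)) = d j})"

definition sliding_block_code ::
  "'a set \<Rightarrow> 'b set \<Rightarrow> 'a seq set \<Rightarrow> 'b seq set \<Rightarrow> ('a seq \<Rightarrow> 'b seq) \<Rightarrow> bool" where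
  "sliding_block_code A B \<Lambda> \<Gamma> \<Phi> \<longleftrightarrow> \<Phi> ` \<Lambda> \<subseteq> \<Gamma> \<and>
     (\<exists>C :: 'b option \<Rightarrow> 'a seq set.
        (\<forall>a\<in>insert None (Some ` B). finitely_defined A \<Lambda> (C a)) \<and>
        (\<forall>a\<in>insert None (Some ` B). \<forall>a'\<in>insert None (Some ` B). a \<noteq> a' \<longrightarrow> C a \<inter> C a' = {}) \<and>
        (\<Union>a\<in>insert None (Some ` B). C a) = \<Lambda> \<and>
        shift ` (C None) \<subseteq> C None \<and>
        (\<forall>x\<in>\<Lambda>. \<forall>n. \<Phi> x n = (THE a. a \<in> insert None (Some ` B) \<and> (shift ^^ n) x \<in> C a)))"

end

theory Submission
  imports Defs
begin

text \<open>The n-th letter of \<Phi> x depends only on the shifted sequence \<sigma>^n x. If x has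
  length m, then \<sigma>^m x is the empty sequence, so the m-th letter of \<Phi> x agrees with
  that of \<Phi> \<O> = \<O>, i.e. it is the empty letter, and l(\<Phi> x) \<le> m.\<close>

lemma funpow_shift: "(shift ^^ n) x = (\<lambda>i. x (i + n))"
  by (induction n arbitrary: x) (auto simp: shift_def funpow_Suc_right)

lemma funpow_shift_emptyseq [simp]: "(shift ^^ n) emptyseq = emptyseq"
  by (simp add: funpow_shift emptyseq_def)

lemma funpow_shift_in: "shift ` L \<subseteq> L \<Longrightarrow> x \<in> L \<Longrightarrow> (shift ^^ n) x \<in> L"
  by (induction n) auto

lemma FullShift_None_after:
  assumes "x \<in> FullShift A" and "x m = None" and "m \<le> j"
  shows "x j = None"
proof -
  have "\<not> (\<forall>i. x i \<in> Some ` A)"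
    using assms(2) by (metis option.distinct(1) image_iff)
  then show ?thesis
    using assms unfolding FullShift_def by blast
qed

lemma len_le_if_None:
  assumes "x n = None"
  shows "len x \<le> enat n"
proof -
  have "(LEAST i. x i = None) \<le> n"
    using assms by (rule Least_le)
  moreover have "\<not> (\<forall>i. x i \<noteq> None)"
    using assms by blast
  ultimately show ?thesis
    unfolding len_def by simp
qed

lemma FullShift_finite_len:
  assumes "x \<in> FullShift A" and "len x = enat m"
  shows "(shift ^^ m) x = emptyseq"
proof -
  have "\<exists>i. x i = None" and m: "m = (LEAST i. x i = None)"
    using assms(2) by (auto simp: len_def split: if_splits)
  then have "x m = None" by (auto intro: LeastI_ex)
  with assms(1) have "x (i + m) = None" for i
    by (simp add: FullShift_None_after)
  then show ?thesis
    by (simp add: funpow_shift emptyseq_def)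
qed

lemma sliding_block_code_letter_local:
  assumes "sliding_block_code A B \<Lambda> \<Gamma> \<Phi>" and "x \<in> \<Lambda>" and "y \<in> \<Lambda>"
    and "(shift ^^ n) x = (shift ^^ n) y"
  shows "\<Phi> x n = \<Phi> y n"
proof -
  obtain C where "\<forall>x\<in>\<Lambda>. \<forall>n. \<Phi> x n = (THE a. a \<in> insert None (Some ` B) \<and> (shift ^^ n) x \<in> C a)"
    using assms(1) unfolding sliding_block_code_def by blast
  with assms(2-4) show ?thesis by simp
qed

theorem mainTheorem6:
  fixes A :: "'a set" and B :: "'b set"
    and \<Lambda> :: "'a seq set" and \<Gamma> :: "'b seq set" and \<Phi> :: "'a seq \<Rightarrow> 'b seq"
  assumes "countable A" and "countable B"
    and "shift_space A \<Lambda>" and "shift_space B \<Gamma>"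
    and "sliding_block_code A B \<Lambda> \<Gamma> \<Phi>"
    and "\<Phi> emptyseq = emptyseq"
  shows "\<forall>x\<in>\<Lambda>. len x < \<infinity> \<longrightarrow> \<Phi> x \<in> \<Gamma> \<and> len (\<Phi> x) < \<infinity> \<and> len (\<Phi> x) \<le> len x"
proof (intro ballI impI)
  fix x assume x: "x \<in> \<Lambda>" and "len x < \<infinity>"
  then obtain m where m: "len x = enat m" by (cases "len x") auto
  have \<Lambda>: "\<Lambda> \<subseteq> FullShift A" "shift ` \<Lambda> \<subseteq> \<Lambda>"
    using assms(3) by (auto simp: shift_space_def)
  have empty_m: "(shift ^^ m) x = emptyseq"
    using FullShift_finite_len \<Lambda>(1) x m by blast
  moreover have "emptyseq \<in> \<Lambda>"
    using funpow_shift_in[OF \<Lambda>(2) x, of m] empty_m by simp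
  ultimately have "\<Phi> x m = \<Phi> emptyseq m"
    using sliding_block_code_letter_local[OF assms(5) x] by simp
  then have "len (\<Phi> x) \<le> enat m"
    using assms(6) by (intro len_le_if_None) (simp add: emptyseq_def)
  moreover from this have "len (\<Phi> x) < \<infinity>"
    by (auto dest: enat_ile)
  moreover have "\<Phi> x \<in> \<Gamma>"
    using assms(5) x by (auto simp: sliding_block_code_def)
  ultimately show "\<Phi> x \<in> \<Gamma> \<and> len (\<Phi> x) < \<infinity> \<and> len (\<Phi> x) \<le> len x"
    using m by simp
qed

end
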